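(* Consider the optimization problem over user association $\mathbf{x}=(x_{ij})$, resource allocation $\mathbf{y}=(y_{ij})$ and power $\mathbf{p}=(p_i)$, $i\in\mathcal I=\{1,\dots,I\}$, $j\in\mathcal J=\{1,\dots,J\}$: \[ \max_{\mathbf x,\mathbf y,\mathbf p}\ \sum_{j\in\mathcal J}\omega_j\log_2\Big(KB\sum_{i\in\mathcal I}y_{ij}\log_2(1+\eta_{ij})\Big) \] subject to $\eta_{ij}=\dfrac{p_i g_{ij}}{\sum_{k\in\mathcal I\setminus\{i\}}d_k p_k g_{kj}+\sigma^2}$ for all $i,j$; $\sum_{i\in\mathcal I}x_{ij}=1$ for all $j$; $d_i=\sum_{j\in\mathcal J}y_{ij}$ for all $i$; $0\le p_i\le P_i$ for all $i$; $0\le d_i\le 1$ for all $i$; $0\le y_{ij}\le x_{ij}$ and $x_{ij}\in\{0,1\}$ for all $i,j$. Then at an optimal solution $(\mathbf x^*,\mathbf y^*,\mathbf p^* )$ the load of every BS is binary: $d_i^*=\sum_{j\in\mathcal J}y^*_{ij}\in\{0,1\}$ for all $i\in\mathcal I$; i.e., each BS operates either at full load ($d_i^*=1$) or at zero load ($d_i^*=0$).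
   Context: Downlink heterogeneous network with $I$ base stations (BSs) and $J$ users. $x_{ij}\in\{0,1\}$ indicates that user $j$ is associated with BS $i$; $y_{ij}$ is the fraction of time-frequency resource blocks BS $i$ allocates to user $j$; $d_i$ is the load of BS $i$; $p_i$ is the per-resource-block transmit power of BS $i$ with maximum $P_i>0$. The constants $K>0$, $B>0$, channel gains $g_{ij}>0$, noise power $\sigma^2>0$ and user priorities $\omega_j>0$ are given. $\eta_{ij}$ is the (load-coupled) average SINR of user $j$ served by BS $i$. *)

theory Defs
  imports Complex_Main "HOL-Library.Extended_Real"
begin

definition bs_load :: "nat \<Rightarrow> (nat \<Rightarrow> nat \<Rightarrow> real) \<Rightarrow> nat \<Rightarrow> real" where
  "bs_load J y i = (\<Sum>j\<in>{1..J}. y i j)"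

definition sinr :: "nat \<Rightarrow> nat \<Rightarrow> (nat \<Rightarrow> nat \<Rightarrow> real) \<Rightarrow> real \<Rightarrow>
    (nat \<Rightarrow> nat \<Rightarrow> real) \<Rightarrow> (nat \<Rightarrow> real) \<Rightarrow> nat \<Rightarrow> nat \<Rightarrow> real" where
  "sinr I J g \<sigma>2 y p i j =
     p i * g i j / ((\<Sum>k\<in>{1..I} - {i}. bs_load J y k * p k * g k j) + \<sigma>2)"

definition user_rate :: "nat \<Rightarrow> nat \<Rightarrow> real \<Rightarrow> real \<Rightarrow> (nat \<Rightarrow> nat \<Rightarrow> real) \<Rightarrow> real \<Rightarrow>
    (nat \<Rightarrow> nat \<Rightarrow> real) \<Rightarrow> (nat \<Rightarrow> real) \<Rightarrow> nat \<Rightarrow> real" where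
  "user_rate I J K B g \<sigma>2 y p j =
     K * B * (\<Sum>i\<in>{1..I}. y i j * log 2 (1 + sinr I J g \<sigma>2 y p i j))"

text \<open>Objective with the standard convention log2 0 = -infinity (rates are always \<ge> 0).\<close>
definition utility :: "nat \<Rightarrow> nat \<Rightarrow> real \<Rightarrow> real \<Rightarrow> (nat \<Rightarrow> nat \<Rightarrow> real) \<Rightarrow> real \<Rightarrow>
    (nat \<Rightarrow> real) \<Rightarrow> (nat \<Rightarrow> nat \<Rightarrow> real) \<Rightarrow> (nat \<Rightarrow> real) \<Rightarrow> ereal" where
  "utility I J K B g \<sigma>2 \<omega> y p =
     (if \<forall>j\<in>{1..J}. user_rate I J K B g \<sigma>2 y p j > 0
      then ereal (\<Sum>j\<in>{1..J}. \<omega> j * log 2 (user_rate I J K B g \<sigma>2 y p j))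
      else -\<infinity>)"

definition feasible :: "nat \<Rightarrow> nat \<Rightarrow> (nat \<Rightarrow> real) \<Rightarrow>
    (nat \<Rightarrow> nat \<Rightarrow> real) \<Rightarrow> (nat \<Rightarrow> nat \<Rightarrow> real) \<Rightarrow> (nat \<Rightarrow> real) \<Rightarrow> bool" where
  "feasible I J P x y p \<longleftrightarrow>
     (\<forall>j\<in>{1..J}. (\<Sum>i\<in>{1..I}. x i j) = 1) \<and>
     (\<forall>i\<in>{1..I}. 0 \<le> p i \<and> p i \<le> P i) \<and>
     (\<forall>i\<in>{1..I}. 0 \<le> bs_load J y i \<and> bs_load J y i \<le> 1) \<and>
     (\<forall>i\<in>{1..I}. \<forall>j\<in>{1..J}. 0 \<le> y i j \<and> y i j \<le> x i j \<and> x i j \<in> {0, 1})"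

definition optimal :: "nat \<Rightarrow> nat \<Rightarrow> real \<Rightarrow> real \<Rightarrow> (nat \<Rightarrow> nat \<Rightarrow> real) \<Rightarrow> real \<Rightarrow>
    (nat \<Rightarrow> real) \<Rightarrow> (nat \<Rightarrow> real) \<Rightarrow>
    (nat \<Rightarrow> nat \<Rightarrow> real) \<Rightarrow> (nat \<Rightarrow> nat \<Rightarrow> real) \<Rightarrow> (nat \<Rightarrow> real) \<Rightarrow> bool" where
  "optimal I J K B g \<sigma>2 \<omega> P x y p \<longleftrightarrow>
     feasible I J P x y p \<and>
     (\<forall>x' y' p'. feasible I J P x' y' p' \<longrightarrow>
        utility I J K B g \<sigma>2 \<omega> y' p' \<le> utility I J K B g \<sigma>2 \<omega> y p)"

end

theory Submission
  imports Defs
begin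

text \<open>Suppose BS \<open>i\<close> had fractional load \<open>0 < d < 1\<close>. Stretch its resource fractions by \<open>1/d\<close>
  and shrink its power by \<open>d\<close>: its load becomes \<open>1\<close>, the interference \<open>d\<^sub>i p\<^sub>i\<close> it causes is
  unchanged, and each of its users trades \<open>t log(1 + s)\<close> for \<open>(t/d) log(1 + d s)\<close>, which is
  larger by strict concavity of the logarithm. A served user of BS \<open>i\<close> strictly gains, nobody
  loses, and the utility is finite at an optimum, so the optimum was not optimal.\<close>

lemma ln_one_plus_scaled_gt:
  fixes d s :: real
  assumes "0 < d" "d < 1" "0 < s"
  shows "d * ln (1 + s) < ln (1 + d * s)"
proof -
  \<comment> \<open>Tangent of \<open>ln\<close> at \<open>u\<close>, evaluated at \<open>1 + s\<close> and at \<open>1\<close>, averaged with weights \<open>d\<close>, \<open>1 - d\<close>.\<close>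
  define u where "u = 1 + d * s"
  have u_pos: "u > 0" using assms by (simp add: u_def add_pos_pos)
  have "ln (1 + s) - ln u < (1 + s - u) / u"
    using ln_diff_less[of "1 + s" u] u_pos assms by (simp add: u_def)
  then have A: "d * (ln (1 + s) - ln u) < d * ((1 + s - u) / u)"
    using assms by (intro mult_strict_left_mono) auto
  have "ln 1 - ln u < (1 - u) / u"
    using ln_diff_less[of 1 u] u_pos assms by (simp add: u_def)
  then have B: "(1 - d) * (ln 1 - ln u) < (1 - d) * ((1 - u) / u)"
    using assms by (intro mult_strict_left_mono) auto
  have "d * ((1 + s - u) / u) + (1 - d) * ((1 - u) / u) = 0"
    using u_pos by (simp add: field_simps u_def)
  with A B have "d * ln (1 + s) < ln u" by (simp add: algebra_simps)
  then show ?thesis by (simp add: u_def)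
qed

lemma log_one_plus_scaled_le:
  fixes b d s t :: real
  assumes "1 < b" "0 < d" "d < 1" "0 \<le> s" "0 \<le> t"
  shows "t * log b (1 + s) \<le> (t / d) * log b (1 + d * s)"
proof -
  have "d * ln (1 + s) \<le> ln (1 + d * s)"
    using ln_one_plus_scaled_gt[of d s] assms by (cases "s = 0") auto
  then have "(t / d) * (d * ln (1 + s)) / ln b \<le> (t / d) * ln (1 + d * s) / ln b"
    using assms by (intro divide_right_mono mult_left_mono) auto
  then show ?thesis using assms by (simp add: log_def)
qed

lemma log_one_plus_scaled_less:
  fixes b d s t :: real
  assumes "1 < b" "0 < d" "d < 1" "0 < s" "0 < t"
  shows "t * log b (1 + s) < (t / d) * log b (1 + d * s)"
proof -
  have "(t / d) * (d * ln (1 + s)) / ln b < (t / d) * ln (1 + d * s) / ln b"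
    using ln_one_plus_scaled_gt[of d s] assms
    by (intro divide_strict_right_mono mult_strict_left_mono) auto
  then show ?thesis using assms by (simp add: log_def)
qed

locale hetnet =
  fixes I J :: nat and K B \<sigma>2 :: real
    and g :: "nat \<Rightarrow> nat \<Rightarrow> real" and \<omega> P :: "nat \<Rightarrow> real"
  assumes K_pos: "K > 0" and B_pos: "B > 0" and noise_pos: "\<sigma>2 > 0"
    and gain_pos: "\<And>i j. i \<in> {1..I} \<Longrightarrow> j \<in> {1..J} \<Longrightarrow> g i j > 0"
    and priority_pos: "\<And>j. j \<in> {1..J} \<Longrightarrow> \<omega> j > 0"
    and power_max_pos: "\<And>i. i \<in> {1..I} \<Longrightarrow> P i > 0"
begin

abbreviation "rate \<equiv> user_rate I J K B g \<sigma>2"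
abbreviation "SINR \<equiv> sinr I J g \<sigma>2"
abbreviation "U \<equiv> utility I J K B g \<sigma>2 \<omega>"

lemma sinr_nonneg:
  assumes "feasible I J P x y p" "i \<in> {1..I}" "j \<in> {1..J}"
  shows "0 \<le> SINR y p i j"
    and "p i > 0 \<Longrightarrow> 0 < SINR y p i j"
proof -
  have "0 \<le> bs_load J y k * p k * g k j" if "k \<in> {1..I} - {i}" for k
  proof -
    from that have k: "k \<in> {1..I}" by blast
    have "0 \<le> bs_load J y k" "0 \<le> p k" using assms(1) k unfolding feasible_def by blast+
    moreover have "0 < g k j" using gain_pos k assms(3) by blast
    ultimately show ?thesis by simp
  qed
  then have "0 \<le> (\<Sum>k\<in>{1..I} - {i}. bs_load J y k * p k * g k j)" by (rule sum_nonneg)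
  then have denom: "(\<Sum>k\<in>{1..I} - {i}. bs_load J y k * p k * g k j) + \<sigma>2 > 0"
    using noise_pos by linarith
  have g_ij: "g i j > 0" using gain_pos assms(2,3) by blast
  have p_i: "0 \<le> p i" using assms(1,2) unfolding feasible_def by blast
  show "0 \<le> SINR y p i j"
    unfolding sinr_def using denom g_ij p_i by simp
  show "0 < SINR y p i j" if "p i > 0"
    unfolding sinr_def using denom g_ij that by simp
qed

lemma feasible_server_unique:
  assumes "feasible I J P x y p" "i \<in> {1..I}" "j \<in> {1..J}" "y i j > 0"
    "k \<in> {1..I}" "k \<noteq> i"
  shows "y k j = 0"
proof -
  have x_bounds: "\<And>k. k \<in> {1..I} \<Longrightarrow> 0 \<le> y k j \<and> y k j \<le> x k j \<and> x k j \<in> {0, 1}"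
    using assms(1,3) unfolding feasible_def by blast
  then have "x i j = 1" using assms(2,4) by fastforce
  moreover have "(\<Sum>l\<in>{1..I}. x l j) = x i j + (\<Sum>l\<in>{1..I} - {i}. x l j)"
    using assms(2) by (simp add: sum.remove)
  moreover have "(\<Sum>l\<in>{1..I}. x l j) = 1" using assms(1,3) unfolding feasible_def by blast
  ultimately have "(\<Sum>l\<in>{1..I} - {i}. x l j) = 0" by simp
  moreover have "\<forall>l\<in>{1..I} - {i}. 0 \<le> x l j" using x_bounds by fastforce
  ultimately have "\<forall>l\<in>{1..I} - {i}. x l j = 0"
    using sum_nonneg_eq_0_iff[of "{1..I} - {i}" "\<lambda>l. x l j"] by simp
  then have "x k j = 0" using assms(5,6) by blast
  then show ?thesis using x_bounds[OF assms(5)] by simp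
qed

lemma user_rate_single_server:
  assumes "i \<in> {1..I}" "\<And>k. k \<in> {1..I} \<Longrightarrow> k \<noteq> i \<Longrightarrow> y k j = 0"
  shows "rate y p j = K * B * (y i j * log 2 (1 + SINR y p i j))"
  unfolding user_rate_def using assms by (simp add: sum.remove)

lemma feasible_rates_pos_exists:
  assumes "1 \<le> I" "1 \<le> J"
  shows "\<exists>x y p. feasible I J P x y p \<and> (\<forall>j\<in>{1..J}. rate y p j > 0)"
proof -
  define x :: "nat \<Rightarrow> nat \<Rightarrow> real" where "x = (\<lambda>k j. if k = 1 then 1 else 0)"
  define y :: "nat \<Rightarrow> nat \<Rightarrow> real" where "y = (\<lambda>k j. if k = 1 then 1 / real J else 0)"
  have load: "bs_load J y k = (if k = 1 then 1 else 0)" for k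
    using assms by (simp add: bs_load_def y_def)
  have feas: "feasible I J P x y P"
    unfolding feasible_def load
    using assms power_max_pos by (auto simp: x_def y_def less_imp_le)
  have "rate y P j > 0" if j: "j \<in> {1..J}" for j
  proof -
    have "0 < SINR y P 1 j"
      using sinr_nonneg(2)[OF feas _ j] assms power_max_pos by auto
    then have "0 < y 1 j * log 2 (1 + SINR y P 1 j)"
      using assms by (simp add: y_def)
    moreover have "rate y P j = K * B * (y 1 j * log 2 (1 + SINR y P 1 j))"
      using assms by (intro user_rate_single_server) (auto simp: y_def)
    ultimately show ?thesis using K_pos B_pos by simp
  qed
  with feas show ?thesis by blast
qed

lemma optimal_rates_pos:
  assumes "optimal I J K B g \<sigma>2 \<omega> P x y p" "j \<in> {1..J}"
  shows "rate y p j > 0"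
proof -
  have "(\<Sum>i\<in>{1..I}. x i j) = 1"
    using assms unfolding optimal_def feasible_def by blast
  then have "1 \<le> I" by (cases I) auto
  then obtain x' y' p' where feas: "feasible I J P x' y' p'"
    and pos: "\<forall>j\<in>{1..J}. rate y' p' j > 0"
    using feasible_rates_pos_exists assms(2) by fastforce
  have "-\<infinity> < U y' p'" using pos unfolding utility_def by simp
  also have "\<dots> \<le> U y p" using assms(1) feas unfolding optimal_def by blast
  finally show ?thesis using assms(2) unfolding utility_def by (auto split: if_splits)
qed

lemma utility_less_of_rates_less:
  assumes pos: "\<forall>j\<in>{1..J}. rate y p j > 0"
    and le: "\<And>j. j \<in> {1..J} \<Longrightarrow> rate y p j \<le> rate y' p' j"
    and less: "j0 \<in> {1..J}" "rate y p j0 < rate y' p' j0"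
  shows "U y p < U y' p'"
proof -
  have pos': "\<forall>j\<in>{1..J}. rate y' p' j > 0" using pos le by (meson less_le_trans)
  have "(\<Sum>j\<in>{1..J}. \<omega> j * log 2 (rate y p j)) < (\<Sum>j\<in>{1..J}. \<omega> j * log 2 (rate y' p' j))"
  proof (rule sum_strict_mono_ex1)
    show "\<forall>j\<in>{1..J}. \<omega> j * log 2 (rate y p j) \<le> \<omega> j * log 2 (rate y' p' j)"
      using pos pos' le priority_pos by (auto intro!: mult_left_mono less_imp_le)
    show "\<exists>j\<in>{1..J}. \<omega> j * log 2 (rate y p j) < \<omega> j * log 2 (rate y' p' j)"
      using pos pos' less priority_pos by (intro bexI[of _ j0]) auto
  qed simp
  then show ?thesis using pos pos' unfolding utility_def by simp
qed

definition stretch_alloc :: "nat \<Rightarrow> real \<Rightarrow> (nat \<Rightarrow> nat \<Rightarrow> real) \<Rightarrow> nat \<Rightarrow> nat \<Rightarrow> real" where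
  "stretch_alloc i d y = (\<lambda>k j. if k = i then y k j / d else y k j)"

definition shrink_power :: "nat \<Rightarrow> real \<Rightarrow> (nat \<Rightarrow> real) \<Rightarrow> nat \<Rightarrow> real" where
  "shrink_power i d p = p(i := d * p i)"

lemma bs_load_stretch_alloc:
  "bs_load J (stretch_alloc i d y) k = (if k = i then bs_load J y k / d else bs_load J y k)"
  unfolding bs_load_def stretch_alloc_def by (simp add: sum_divide_distrib)

lemma sinr_stretch_shrink:
  assumes "d \<noteq> 0"
  shows "SINR (stretch_alloc i d y) (shrink_power i d p) k j =
    (if k = i then d * SINR y p k j else SINR y p k j)"
proof -
  have interference: "bs_load J (stretch_alloc i d y) l * shrink_power i d p l
      = bs_load J y l * p l" for l
    using assms by (simp add: bs_load_stretch_alloc shrink_power_def)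
  show ?thesis unfolding sinr_def interference by (simp add: shrink_power_def)
qed

lemma feasible_stretch_shrink:
  assumes feas: "feasible I J P x y p" and i: "i \<in> {1..I}"
    and d: "d = bs_load J y i" "0 < d"
  shows "feasible I J P x (stretch_alloc i d y) (shrink_power i d p)"
proof -
  have d_le: "d \<le> 1" using feas i d unfolding feasible_def by blast
  have "y i j \<le> d" if "j \<in> {1..J}" for j
    using feas i that unfolding feasible_def d bs_load_def by (auto intro: member_le_sum)
  then have "y i j / d \<le> x i j"
    if "j \<in> {1..J}" "0 \<le> y i j" "y i j \<le> x i j" "x i j \<in> {0, 1}" for j
    using that d by (auto simp: divide_le_eq)
  moreover have "d * p i \<le> P i" if "0 \<le> p i" "p i \<le> P i"
    using that d d_le mult_left_le_one_le[of "p i" d] by linarith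
  moreover have "\<forall>k\<in>{1..I}. 0 \<le> bs_load J (stretch_alloc i d y) k \<and>
      bs_load J (stretch_alloc i d y) k \<le> 1"
    using feas d unfolding feasible_def bs_load_stretch_alloc by auto
  ultimately show ?thesis
    using feas i d unfolding feasible_def
    by (auto simp: shrink_power_def stretch_alloc_def)
qed

lemma user_rate_stretch_shrink:
  assumes feas: "feasible I J P x y p" and i: "i \<in> {1..I}"
    and d: "0 < d" "d < 1" and j: "j \<in> {1..J}"
  shows "rate y p j \<le> rate (stretch_alloc i d y) (shrink_power i d p) j"
    and "y i j > 0 \<Longrightarrow> p i > 0 \<Longrightarrow>
      rate y p j < rate (stretch_alloc i d y) (shrink_power i d p) j"
proof -
  let ?y' = "stretch_alloc i d y" and ?p' = "shrink_power i d p"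
  let ?term = "\<lambda>y p k. y k j * log 2 (1 + SINR y p k j)"
  have new_term: "?term ?y' ?p' k =
      (if k = i then (y i j / d) * log 2 (1 + d * SINR y p i j) else ?term y p k)" for k
    using d unfolding sinr_stretch_shrink[OF less_imp_neq[OF d(1), symmetric]]
    by (simp add: stretch_alloc_def)
  have y_nonneg: "0 \<le> y i j" using feas i j unfolding feasible_def by blast
  have term_le: "?term y p k \<le> ?term ?y' ?p' k" if "k \<in> {1..I}" for k
    unfolding new_term
    using log_one_plus_scaled_le[of 2 d "SINR y p i j" "y i j"] d y_nonneg
      sinr_nonneg(1)[OF feas i j] by simp
  show "rate y p j \<le> rate ?y' ?p' j"
    unfolding user_rate_def using K_pos B_pos term_le
    by (intro mult_left_mono sum_mono) auto
  assume "y i j > 0" "p i > 0"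
  then have "?term y p i < ?term ?y' ?p' i"
    unfolding new_term
    using log_one_plus_scaled_less[of 2 d "SINR y p i j" "y i j"] d
      sinr_nonneg(2)[OF feas i j] by simp
  then show "rate y p j < rate ?y' ?p' j"
    unfolding user_rate_def using K_pos B_pos term_le i
    by (intro mult_strict_left_mono sum_strict_mono_ex1) auto
qed

lemma optimal_bs_load_binary:
  assumes opt: "optimal I J K B g \<sigma>2 \<omega> P x y p" and i: "i \<in> {1..I}"
  shows "bs_load J y i \<in> {0, 1}"
proof (rule ccontr)
  assume not_binary: "bs_load J y i \<notin> {0, 1}"
  define d where "d = bs_load J y i"
  have feas: "feasible I J P x y p" using opt unfolding optimal_def by blast
  then have "0 \<le> d" "d \<le> 1" using i unfolding feasible_def d_def by blast+
  with not_binary have d: "0 < d" "d < 1" unfolding d_def by auto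
  obtain j where j: "j \<in> {1..J}" "y i j > 0"
  proof (rule ccontr)
    assume "\<not> thesis"
    with that have "\<forall>j\<in>{1..J}. y i j \<le> 0" by (meson not_less)
    then have "d \<le> 0" unfolding d_def bs_load_def by (intro sum_nonpos) auto
    with d show False by simp
  qed
  have "p i > 0"
  proof (rule ccontr)
    assume "\<not> p i > 0"
    moreover have "0 \<le> p i" using feas i unfolding feasible_def by blast
    ultimately have "p i = 0" by simp
    then have "rate y p j = 0"
      using user_rate_single_server[of i y j p] feasible_server_unique[OF feas i j] i
      by (simp add: sinr_def)
    with optimal_rates_pos[OF opt j(1)] show False by simp
  qed
  have "U y p < U (stretch_alloc i d y) (shrink_power i d p)"
    using optimal_rates_pos[OF opt] user_rate_stretch_shrink[OF feas i d] j \<open>p i > 0\<close>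
    by (intro utility_less_of_rates_less) auto
  moreover have "U (stretch_alloc i d y) (shrink_power i d p) \<le> U y p"
    using opt feasible_stretch_shrink[OF feas i d_def d(1)] unfolding optimal_def by blast
  ultimately show False by simp
qed

end

theorem theorem2:
  fixes I J :: nat and K B \<sigma>2 :: real
    and g :: "nat \<Rightarrow> nat \<Rightarrow> real" and \<omega> P :: "nat \<Rightarrow> real"
    and x y :: "nat \<Rightarrow> nat \<Rightarrow> real" and p :: "nat \<Rightarrow> real"
  assumes "K > 0" and "B > 0" and "\<sigma>2 > 0"
    and "\<forall>i\<in>{1..I}. \<forall>j\<in>{1..J}. g i j > 0"
    and "\<forall>j\<in>{1..J}. \<omega> j > 0"
    and "\<forall>i\<in>{1..I}. P i > 0"
    and "optimal I J K B g \<sigma>2 \<omega> P x y p"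
  shows "\<forall>i\<in>{1..I}. bs_load J y i \<in> {0, 1}"
proof -
  interpret hetnet I J K B \<sigma>2 g \<omega> P
    using assms(1-6) by unfold_locales auto
  show ?thesis using optimal_bs_load_binary[OF assms(7)] by blast
qed

end
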